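(* Let $I$ be a resident-minimal instance in which every hospital has quota $1$ (the stable marriage case). Then each $(r,h)\in\mathrm{tent}(I)$ is finalizable in $I$ only if it belongs to the maximal safe set with respect to $I$ (the unique inclusion-maximal subset of $\mathrm{tent}(I)$ that is safe with respect to $I$).
   Context: An instance $I$ consists of finite disjoint sets $R$ (residents) and $H$ (hospitals), a positive integer quota $q_h$ for each $h\in H$, for each $r\in R$ a preference list of $r$ (a sequence of distinct members of $H$, not necessarily all), and for each $h\in H$ a preference list of $h$ (a sequence of distinct members of $R$). A list is complete if it contains every member of the opposite side; an instance is complete if all lists are complete. A match is a pair $(r,h)\in R\times H$. For a set $M$ of matches, $\mathrm{res}_h M=\{r:(r,h)\in M\}$, $\mathrm{res}\,M=\{r:(r,h)\in M\text{ for some }h\}$. $J$ is an extension of $I$ (same $R,H$, quotas) if every list of $J$ has the corresponding list of $I$ as a prefix; a complete extension is a completion. An event is $(r,h)^+$ (proposal) or $(r,h)^-$ (rejection). For an event sequence $\sigma$, $\mathrm{prop}(\sigma)$, $\mathrm{rej}(\sigma)$ are the sets of matches proposed/rejected in $\sigma$, $\mathrm{tent}(\sigma)=\mathrm{prop}(\sigma)\setminus\mathrm{rej}(\sigma)$, and $\mathrm{pend}_I(\sigma)$ is the set of $(r,h)\in\mathrm{tent}(\sigma)$ with $r$ not on the list of $h$ in $I$. A match $(r,h)\in M$ is ousted from $M$ in $I$ if the list of $h$ in $I$ contains at least $q_h$ residents of $\mathrm{res}_h M$ and either $r$ is not on it or $r$ is preceded on it by at least $q_h$ residents of $\mathrm{res}_h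 M$. $I$-feasible sequences: the empty sequence is $I$-feasible; if $\sigma$ is $I$-feasible then $\sigma+(r,h)^+$ is $I$-feasible if $r\notin\mathrm{res}\,\mathrm{tent}(\sigma)$, $(r,h)\notin\mathrm{prop}(\sigma)$, $h$ is on the list of $r$ in $I$ and $(r,h')\in\mathrm{rej}(\sigma)$ for every $h'$ preceding $h$ on it; and $\sigma+(r,h)^-$ is $I$-feasible if $(r,h)$ is ousted from $\mathrm{prop}(\sigma)$ in $I$ and $(r,h)\notin\mathrm{rej}(\sigma)$. All maximal $I$-feasible sequences contain the same events; $\mathrm{prop}(I),\mathrm{tent}(I),\mathrm{pend}(I)$ denote $\mathrm{prop}(\sigma),\mathrm{tent}(\sigma),\mathrm{pend}_I(\sigma)$ for any maximal $I$-feasible $\sigma$. A match $(r,h)\in\mathrm{tent}(I)$ is finalizable in $I$ if $(r,h)\in\mathrm{tent}(J)$ for every completion $J$ of $I$. $I$ is resident-minimal if $\mathrm{prop}(I)$ equals the set of matches $(r,h)$ with $h$ on the list of $r$ in $I$. Let $M\subseteq\mathrm{tent}(I)$. A resident $r'$ is relevant to $h$ with respect to $M$ if $(r',h)\in M$ or $r'\notin\mathrm{res}\,M$. A match $(r,h)\in M$ is endangered in $M$ with respect to $I$ if: when $(r,h)\in\mathrm{tent}(I)\setminus\mathrm{pend}(I)$, the list of $h$ in $I$ contains at least $q_h$ residents preceding $r$ that are relevant to $h$ with respect to $M$; when $(r,h)\in\mathrm{pend}(I)$, the number of residents relevant to $h$ with respect to $M$ is at least $q_h+1$. $M$ is safe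 with respect to $I$ if no match of $M$ is endangered in $M$ with respect to $I$. (There is a unique inclusion-maximal safe subset of $\mathrm{tent}(I)$.) *)

theory Defs
  imports Main
begin

text \<open>Residents have type 'r, hospitals type 'h
  (so the two sets are automatically disjoint). Lists of non-residents / non-hospitals are
  required to be empty; they carry no meaning.\<close>

record ('r, 'h) hr_instance =
  Res   :: "'r set"
  Hosp  :: "'h set"
  quota :: "'h \<Rightarrow> nat"
  rlist :: "'r \<Rightarrow> 'h list"
  hlist :: "'h \<Rightarrow> 'r list"

definition wf_instance :: "('r, 'h) hr_instance \<Rightarrow> bool" where
  "wf_instance I \<longleftrightarrow> finite (Res I) \<and> finite (Hosp I)
     \<and> (\<forall>h\<in>Hosp I. quota I h > 0)
     \<and> (\<forall>r\<in>Res I. distinct (rlist I r) \<and> set (rlist I r) \<subseteq> Hosp I)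
     \<and> (\<forall>h\<in>Hosp I. distinct (hlist I h) \<and> set (hlist I h) \<subseteq> Res I)
     \<and> (\<forall>r. r \<notin> Res I \<longrightarrow> rlist I r = [])
     \<and> (\<forall>h. h \<notin> Hosp I \<longrightarrow> hlist I h = [])"

definition complete_instance :: "('r, 'h) hr_instance \<Rightarrow> bool" where
  "complete_instance I \<longleftrightarrow> (\<forall>r\<in>Res I. set (rlist I r) = Hosp I)
     \<and> (\<forall>h\<in>Hosp I. set (hlist I h) = Res I)"

definition extension :: "('r, 'h) hr_instance \<Rightarrow> ('r, 'h) hr_instance \<Rightarrow> bool" where
  "extension I J \<longleftrightarrow> wf_instance J \<and> Res J = Res I \<and> Hosp J = Hosp I
     \<and> (\<forall>h\<in>Hosp I. quota J h = quota I h)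
     \<and> (\<forall>r\<in>Res I. (\<exists>ys. rlist J r = rlist I r @ ys))
     \<and> (\<forall>h\<in>Hosp I. (\<exists>ys. hlist J h = hlist I h @ ys))"

definition completion :: "('r, 'h) hr_instance \<Rightarrow> ('r, 'h) hr_instance \<Rightarrow> bool" where
  "completion I J \<longleftrightarrow> extension I J \<and> complete_instance J"

definition precedes :: "'a list \<Rightarrow> 'a \<Rightarrow> 'a \<Rightarrow> bool" where
  "precedes xs a b \<longleftrightarrow> (\<exists>i j. i < j \<and> j < length xs \<and> xs ! i = a \<and> xs ! j = b)"

datatype ('r, 'h) event = Prop 'r 'h | Rej 'r 'h

definition props :: "('r, 'h) event list \<Rightarrow> ('r \<times> 'h) set" where
  "props \<sigma> = {(r, h). Prop r h \<in> set \<sigma>}"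

definition rejs :: "('r, 'h) event list \<Rightarrow> ('r \<times> 'h) set" where
  "rejs \<sigma> = {(r, h). Rej r h \<in> set \<sigma>}"

definition tents :: "('r, 'h) event list \<Rightarrow> ('r \<times> 'h) set" where
  "tents \<sigma> = props \<sigma> - rejs \<sigma>"

definition pends :: "('r, 'h) hr_instance \<Rightarrow> ('r, 'h) event list \<Rightarrow> ('r \<times> 'h) set" where
  "pends I \<sigma> = {(r, h) \<in> tents \<sigma>. r \<notin> set (hlist I h)}"

definition res_h :: "'h \<Rightarrow> ('r \<times> 'h) set \<Rightarrow> 'r set" where
  "res_h h M = {r. (r, h) \<in> M}"

definition res_of :: "('r \<times> 'h) set \<Rightarrow> 'r set" where
  "res_of M = {r. \<exists>h. (r, h) \<in> M}"

definition ousted :: "('r, 'h) hr_instance \<Rightarrow> ('r \<times> 'h) set \<Rightarrow> 'r \<Rightarrow> 'h \<Rightarrow> bool" where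
  "ousted I M r h \<longleftrightarrow> (r, h) \<in> M
     \<and> card (set (hlist I h) \<inter> res_h h M) \<ge> quota I h
     \<and> (r \<notin> set (hlist I h)
        \<or> card {r'\<in>res_h h M. precedes (hlist I h) r' r} \<ge> quota I h)"

inductive feasible :: "('r, 'h) hr_instance \<Rightarrow> ('r, 'h) event list \<Rightarrow> bool" for I where
  feas_Nil: "feasible I []"
| feas_Prop: "feasible I \<sigma> \<Longrightarrow> r \<notin> res_of (tents \<sigma>) \<Longrightarrow> (r, h) \<notin> props \<sigma>
     \<Longrightarrow> h \<in> set (rlist I r)
     \<Longrightarrow> (\<forall>h'. precedes (rlist I r) h' h \<longrightarrow> (r, h') \<in> rejs \<sigma>)
     \<Longrightarrow> feasible I (\<sigma> @ [Prop r h])"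
| feas_Rej: "feasible I \<sigma> \<Longrightarrow> ousted I (props \<sigma>) r h \<Longrightarrow> (r, h) \<notin> rejs \<sigma>
     \<Longrightarrow> feasible I (\<sigma> @ [Rej r h])"

definition maximal_feasible :: "('r, 'h) hr_instance \<Rightarrow> ('r, 'h) event list \<Rightarrow> bool" where
  "maximal_feasible I \<sigma> \<longleftrightarrow> feasible I \<sigma> \<and> (\<forall>e. \<not> feasible I (\<sigma> @ [e]))"

text \<open>All maximal feasible sequences contain the same events (paper), so any choice works.\<close>
definition max_seq :: "('r, 'h) hr_instance \<Rightarrow> ('r, 'h) event list" where
  "max_seq I = (SOME \<sigma>. maximal_feasible I \<sigma>)"

definition propI :: "('r, 'h) hr_instance \<Rightarrow> ('r \<times> 'h) set" where
  "propI I = props (max_seq I)"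

definition tentI :: "('r, 'h) hr_instance \<Rightarrow> ('r \<times> 'h) set" where
  "tentI I = tents (max_seq I)"

definition pendI :: "('r, 'h) hr_instance \<Rightarrow> ('r \<times> 'h) set" where
  "pendI I = pends I (max_seq I)"

definition finalizable :: "('r, 'h) hr_instance \<Rightarrow> 'r \<Rightarrow> 'h \<Rightarrow> bool" where
  "finalizable I r h \<longleftrightarrow> (r, h) \<in> tentI I \<and> (\<forall>J. completion I J \<longrightarrow> (r, h) \<in> tentI J)"

definition resident_minimal :: "('r, 'h) hr_instance \<Rightarrow> bool" where
  "resident_minimal I \<longleftrightarrow> propI I = {(r, h). h \<in> set (rlist I r)}"

definition relevant :: "('r \<times> 'h) set \<Rightarrow> 'h \<Rightarrow> 'r \<Rightarrow> bool" where
  "relevant M h r' \<longleftrightarrow> (r', h) \<in> M \<or> r' \<notin> res_of M"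

definition endangered :: "('r, 'h) hr_instance \<Rightarrow> ('r \<times> 'h) set \<Rightarrow> 'r \<Rightarrow> 'h \<Rightarrow> bool" where
  "endangered I M r h \<longleftrightarrow> (r, h) \<in> M \<and>
     (if (r, h) \<in> pendI I
      then card {r'\<in>Res I. relevant M h r'} \<ge> quota I h + 1
      else card {r'\<in>Res I. precedes (hlist I h) r' r \<and> relevant M h r'} \<ge> quota I h)"

definition safe :: "('r, 'h) hr_instance \<Rightarrow> ('r \<times> 'h) set \<Rightarrow> bool" where
  "safe I M \<longleftrightarrow> M \<subseteq> tentI I \<and> (\<forall>(r, h)\<in>M. \<not> endangered I M r h)"

text \<open>The unique inclusion-maximal safe subset of tent(I) (uniqueness is a fact from the paper).\<close>
definition max_safe :: "('r, 'h) hr_instance \<Rightarrow> ('r \<times> 'h) set" where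
  "max_safe I = (THE M. safe I M \<and> (\<forall>M'. safe I M' \<and> M \<subseteq> M' \<longrightarrow> M' = M))"

end

theory Submission
  imports Defs
begin

text \<open>The set F of all finalizable matches is safe; since safety is preserved under unions, F is
  contained in the maximal safe set. Suppose a match (r, h) of F were endangered in F. As h has
  quota 1, some resident r' \<noteq> r relevant to h with respect to F would beat r at h: r' precedes r on
  the list of h, or r is not on it at all. If r' has already proposed to h in I, a completion
  placing r' before r on the list of h rejects r. Otherwise, by resident-minimality, h is not on the
  list of r', and relevance means that r' has no finalizable match. So in some completion r' runs
  through its entire list of I and ends up free; making h the next choice of r' and placing r'
  before r on the list of h, r' proposes to h and ousts r. Either way (r, h) is not tentative in
  some completion, contradicting finalizability.\<close>

section \<open>Positions in preference lists\<close>

lemma precedes_Nil [simp]: "\<not> precedes [] a b"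
  by (simp add: precedes_def)

lemma precedes_Cons: "precedes (x # xs) a b \<longleftrightarrow> (x = a \<and> b \<in> set xs) \<or> precedes xs a b"
proof
  assume "precedes (x # xs) a b"
  then obtain i j where ij: "i < j" "j < Suc (length xs)" "(x # xs) ! i = a" "(x # xs) ! j = b"
    unfolding precedes_def by auto
  then obtain j' where j: "j = Suc j'" by (cases j) auto
  show "(x = a \<and> b \<in> set xs) \<or> precedes xs a b"
  proof (cases i)
    case 0
    then show ?thesis using ij j by (auto simp: in_set_conv_nth)
  next
    case (Suc i')
    then show ?thesis using ij j unfolding precedes_def by (intro disjI2 exI[of _ i'] exI[of _ j']) auto
  qed
next
  assume "(x = a \<and> b \<in> set xs) \<or> precedes xs a b"
  then show "precedes (x # xs) a b"
  proof
    assume "x = a \<and> b \<in> set xs"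
    then obtain k where "k < length xs" "xs ! k = b" "x = a" by (auto simp: in_set_conv_nth)
    then show ?thesis unfolding precedes_def by (intro exI[of _ 0] exI[of _ "Suc k"]) auto
  next
    assume "precedes xs a b"
    then obtain i j where "i < j" "j < length xs" "xs ! i = a" "xs ! j = b"
      unfolding precedes_def by blast
    then show ?thesis unfolding precedes_def by (intro exI[of _ "Suc i"] exI[of _ "Suc j"]) auto
  qed
qed

lemma precedes_imp_mem: "precedes xs a b \<Longrightarrow> a \<in> set xs \<and> b \<in> set xs"
  by (induction xs) (auto simp: precedes_Cons)

lemma precedes_append:
  "precedes (xs @ ys) a b \<longleftrightarrow> precedes xs a b \<or> (a \<in> set xs \<and> b \<in> set ys) \<or> precedes ys a b"
  by (induction xs) (auto simp: precedes_Cons)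

lemma precedes_append_left:
  "b \<in> set xs \<Longrightarrow> distinct (xs @ ys) \<Longrightarrow> precedes (xs @ ys) a b \<longleftrightarrow> precedes xs a b"
  by (auto simp: precedes_append dest: precedes_imp_mem)

lemma precedes_filter: "P a \<Longrightarrow> P b \<Longrightarrow> precedes (filter P xs) a b \<longleftrightarrow> precedes xs a b"
  by (induction xs) (auto simp: precedes_Cons)

lemma precedes_irrefl: "distinct xs \<Longrightarrow> \<not> precedes xs a a"
  by (induction xs) (auto simp: precedes_Cons)

lemma precedes_total:
  "a \<in> set xs \<Longrightarrow> b \<in> set xs \<Longrightarrow> a \<noteq> b \<Longrightarrow> precedes xs a b \<or> precedes xs b a"
  by (induction xs) (auto simp: precedes_Cons)

lemma finite_precedes: "finite {x \<in> A. precedes xs x b}"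
  by (rule finite_subset[of _ "set xs"]) (auto dest: precedes_imp_mem)

lemma exists_move_before:
  assumes "distinct ys" "b \<in> set ys" "a \<noteq> b"
  shows "\<exists>zs. distinct zs \<and> set zs = insert a (set ys) \<and> precedes zs a b
    \<and> filter (\<lambda>x. x \<noteq> a) zs = filter (\<lambda>x. x \<noteq> a) ys"
proof -
  have "b \<in> set (filter (\<lambda>x. x \<noteq> a) ys)" using assms by simp
  then obtain us vs where uv: "filter (\<lambda>x. x \<noteq> a) ys = us @ b # vs"
    by (meson split_list)
  have set_uv: "set (us @ b # vs) = set ys - {a}" and "distinct (us @ b # vs)"
    unfolding uv[symmetric] using assms(1) by auto
  then have "a \<notin> set us" "a \<notin> set vs" by auto
  then have "filter (\<lambda>x. x \<noteq> a) us = us" "filter (\<lambda>x. x \<noteq> a) vs = vs"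
    by (auto simp: filter_id_conv)
  then have "filter (\<lambda>x. x \<noteq> a) (us @ a # b # vs) = filter (\<lambda>x. x \<noteq> a) ys"
    using assms(3) by (simp add: uv)
  with \<open>a \<notin> set us\<close> \<open>a \<notin> set vs\<close> \<open>distinct (us @ b # vs)\<close> set_uv assms(3) show ?thesis
    by (intro exI[of _ "us @ a # b # vs"]) (auto simp: precedes_append precedes_Cons)
qed

section \<open>Feasible event sequences\<close>

lemma props_append [simp]: "props (\<sigma> @ \<tau>) = props \<sigma> \<union> props \<tau>"
  by (auto simp: props_def)

lemma rejs_append [simp]: "rejs (\<sigma> @ \<tau>) = rejs \<sigma> \<union> rejs \<tau>"
  by (auto simp: rejs_def)

lemma props_simps [simp]: "props [] = {}" "props [Prop r h] = {(r, h)}" "props [Rej r h] = {}"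
  by (auto simp: props_def)

lemma rejs_simps [simp]: "rejs [] = {}" "rejs [Prop r h] = {}" "rejs [Rej r h] = {(r, h)}"
  by (auto simp: rejs_def)

lemma mem_props_iff: "(r, h) \<in> props \<sigma> \<longleftrightarrow> Prop r h \<in> set \<sigma>"
  by (simp add: props_def)

lemma mem_rejs_iff: "(r, h) \<in> rejs \<sigma> \<longleftrightarrow> Rej r h \<in> set \<sigma>"
  by (simp add: rejs_def)

lemma ousted_imp_mem: "ousted I M r h \<Longrightarrow> (r, h) \<in> M"
  by (simp add: ousted_def)

lemma ousted_mono: "ousted I M r h \<Longrightarrow> M \<subseteq> M' \<Longrightarrow> ousted I M' r h"
proof -
  assume o: "ousted I M r h" and MM': "M \<subseteq> M'"
  have R: "res_h h M \<subseteq> res_h h M'" using MM' by (auto simp: res_h_def)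
  have "card (set (hlist I h) \<inter> res_h h M) \<le> card (set (hlist I h) \<inter> res_h h M')"
    by (rule card_mono) (use R in auto)
  moreover have "card {r' \<in> res_h h M. precedes (hlist I h) r' r}
      \<le> card {r' \<in> res_h h M'. precedes (hlist I h) r' r}"
    by (rule card_mono[OF finite_precedes]) (use R in auto)
  ultimately show ?thesis using o MM' unfolding ousted_def by auto
qed

lemma feasible_snoc_RejD: "feasible I (\<sigma> @ [Rej r h]) \<Longrightarrow> ousted I (props \<sigma>) r h"
  by (cases rule: feasible.cases) auto

lemma feasible_appendD: "feasible I (\<sigma> @ \<tau>) \<Longrightarrow> feasible I \<sigma>"
proof (induction \<tau> rule: rev_induct)
  case (snoc e \<tau>)
  have "feasible I ((\<sigma> @ \<tau>) @ [e])" using snoc.prems by simp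
  then have "feasible I (\<sigma> @ \<tau>)" by (cases rule: feasible.cases) auto
  then show ?case by (rule snoc.IH)
qed simp

lemma feasible_props_subset:
  "feasible I \<sigma> \<Longrightarrow> rejs \<sigma> \<subseteq> props \<sigma> \<and> props \<sigma> \<subseteq> {(r, h). h \<in> set (rlist I r)}"
  by (induction rule: feasible.induct) (auto dest: ousted_imp_mem)

lemma feasible_PropD:
  "feasible I \<sigma> \<Longrightarrow> Prop r h \<in> set \<sigma> \<Longrightarrow>
   h \<in> set (rlist I r) \<and> (\<forall>h'. precedes (rlist I r) h' h \<longrightarrow> (r, h') \<in> rejs \<sigma>)"
  by (induction rule: feasible.induct) auto

lemma feasible_tents_unique:
  "feasible I \<sigma> \<Longrightarrow> (r, h1) \<in> tents \<sigma> \<Longrightarrow> (r, h2) \<in> tents \<sigma> \<Longrightarrow> h1 = h2"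
  by (induction arbitrary: r h1 h2 rule: feasible.induct) (auto simp: tents_def res_of_def)

lemma feasible_distinct: "feasible I \<sigma> \<Longrightarrow> distinct \<sigma>"
  by (induction rule: feasible.induct) (auto simp: mem_props_iff mem_rejs_iff)

lemma wf_instance_rlistD: "wf_instance I \<Longrightarrow> h \<in> set (rlist I r) \<Longrightarrow> r \<in> Res I \<and> h \<in> Hosp I"
  unfolding wf_instance_def by (metis empty_iff empty_set subsetD)

lemma feasible_props_mem:
  "wf_instance I \<Longrightarrow> feasible I \<sigma> \<Longrightarrow> (r, h) \<in> props \<sigma> \<Longrightarrow> r \<in> Res I \<and> h \<in> Hosp I"
  using feasible_props_subset wf_instance_rlistD by fast

lemma feasible_transfer:
  assumes "feasible A \<sigma>"
    and "\<And>r h. Prop r h \<in> set \<sigma> \<Longrightarrow> h \<in> set (rlist A r) \<Longrightarrow>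
          h \<in> set (rlist B r) \<and> (\<forall>h'. precedes (rlist B r) h' h \<longrightarrow> precedes (rlist A r) h' h)"
    and "\<And>M r h. M \<subseteq> props \<sigma> \<Longrightarrow> ousted A M r h \<Longrightarrow> ousted B M r h"
  shows "feasible B \<sigma>"
  using assms
proof (induction rule: feasible.induct)
  case feas_Nil
  show ?case by (rule feasible.feas_Nil)
next
  case (feas_Prop \<sigma> r h)
  have "feasible B \<sigma>"
    by (intro feas_Prop.IH feas_Prop.prems) auto
  then show ?case using feas_Prop.prems(1)[of r h] feas_Prop.hyps
    by (auto intro!: feasible.feas_Prop)
next
  case (feas_Rej \<sigma> r h)
  have "feasible B \<sigma>" by (intro feas_Rej.IH feas_Rej.prems) auto
  then show ?case using feas_Rej.prems(2)[of "props \<sigma>"] feas_Rej.hyps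
    by (auto intro!: feasible.feas_Rej)
qed

lemma maximal_feasible_exists:
  assumes "wf_instance I"
  shows "\<exists>\<sigma>. maximal_feasible I \<sigma>"
proof -
  define E where "E = (\<lambda>(r, h). Prop r h) ` (Res I \<times> Hosp I) \<union> (\<lambda>(r, h). Rej r h) ` (Res I \<times> Hosp I)"
  have "finite E" using assms by (simp add: E_def wf_instance_def)
  have "length \<sigma> \<le> card E" if f: "feasible I \<sigma>" for \<sigma>
  proof -
    have "set \<sigma> \<subseteq> E"
    proof
      fix e assume e: "e \<in> set \<sigma>"
      show "e \<in> E"
      proof (cases e)
        case (Prop r h)
        then have "(r, h) \<in> props \<sigma>" using e by (simp add: mem_props_iff)
        then show ?thesis using feasible_props_mem[OF assms f] Prop by (force simp: E_def)
      next
        case (Rej r h)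
        then have "(r, h) \<in> props \<sigma>" using e feasible_props_subset[OF f] by (auto simp: mem_rejs_iff)
        then show ?thesis using feasible_props_mem[OF assms f] Rej by (force simp: E_def)
      qed
    qed
    then have "card (set \<sigma>) \<le> card E" by (rule card_mono[OF \<open>finite E\<close>])
    then show ?thesis by (simp add: distinct_card[OF feasible_distinct[OF f]])
  qed
  then obtain \<sigma> where "feasible I \<sigma>" and longest: "\<And>\<tau>. feasible I \<tau> \<Longrightarrow> length \<tau> \<le> length \<sigma>"
    using ex_has_greatest_nat[of "feasible I" "[]" length "Suc (card E)"] feasible.feas_Nil
    by (metis less_Suc_eq_le)
  moreover have "\<not> feasible I (\<sigma> @ [e])" for e using longest[of "\<sigma> @ [e]"] by auto
  ultimately show ?thesis unfolding maximal_feasible_def by blast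
qed

lemma maximal_feasible_max_seq: "wf_instance I \<Longrightarrow> maximal_feasible I (max_seq I)"
  unfolding max_seq_def by (rule someI_ex) (rule maximal_feasible_exists)

lemma feasible_max_seq: "wf_instance I \<Longrightarrow> feasible I (max_seq I)"
  using maximal_feasible_max_seq[of I] by (simp add: maximal_feasible_def)

text \<open>No event, once enabled, can become disabled again, so a maximal sequence contains it.\<close>

lemma feasible_subset_maximal:
  assumes max: "maximal_feasible I \<sigma>" and "feasible I \<tau>"
  shows "set \<tau> \<subseteq> set \<sigma>"
  using \<open>feasible I \<tau>\<close>
proof (induction rule: feasible.induct)
  case feas_Nil
  then show ?case by simp
next
  have f\<sigma>: "feasible I \<sigma>" and stuck: "\<And>e. \<not> feasible I (\<sigma> @ [e])"
    using max by (auto simp: maximal_feasible_def)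
  case (feas_Prop \<tau> r h)
  have rejs: "rejs \<tau> \<subseteq> rejs \<sigma>" using feas_Prop.IH by (auto simp: rejs_def)
  have "Prop r h \<in> set \<sigma>"
  proof (rule ccontr)
    assume np: "Prop r h \<notin> set \<sigma>"
    have "r \<notin> res_of (tents \<sigma>)"
    proof
      assume "r \<in> res_of (tents \<sigma>)"
      then obtain h0 where p0: "Prop r h0 \<in> set \<sigma>" and nr0: "(r, h0) \<notin> rejs \<sigma>"
        by (auto simp: res_of_def tents_def mem_props_iff)
      note h0 = feasible_PropD[OF f\<sigma> p0]
      have "h0 \<noteq> h" using p0 np by auto
      then consider "precedes (rlist I r) h0 h" | "precedes (rlist I r) h h0"
        using precedes_total h0 feas_Prop.hyps(4) by metis
      then show False
      proof cases
        case 1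
        then show False using feas_Prop.hyps(5) rejs nr0 by auto
      next
        case 2
        then show False using h0 feasible_props_subset[OF f\<sigma>] np by (auto simp: mem_props_iff)
      qed
    qed
    then have "feasible I (\<sigma> @ [Prop r h])"
      using np feas_Prop.hyps rejs by (auto simp: mem_props_iff intro!: feasible.feas_Prop f\<sigma>)
    then show False using stuck by blast
  qed
  then show ?case using feas_Prop.IH by auto
next
  have f\<sigma>: "feasible I \<sigma>" and stuck: "\<And>e. \<not> feasible I (\<sigma> @ [e])"
    using max by (auto simp: maximal_feasible_def)
  case (feas_Rej \<tau> r h)
  have "props \<tau> \<subseteq> props \<sigma>" using feas_Rej.IH by (auto simp: props_def)
  then have "Rej r h \<in> set \<sigma>"
    using stuck feasible.feas_Rej[OF f\<sigma> ousted_mono[OF feas_Rej.hyps(2)]]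
    by (auto simp: mem_rejs_iff)
  then show ?case using feas_Rej.IH by auto
qed

lemma feasible_subset_max_seq: "wf_instance I \<Longrightarrow> feasible I \<sigma> \<Longrightarrow> set \<sigma> \<subseteq> set (max_seq I)"
  by (rule feasible_subset_maximal[OF maximal_feasible_max_seq])

lemma ousted_not_tentI: "wf_instance I \<Longrightarrow> ousted I (propI I) r h \<Longrightarrow> (r, h) \<notin> tentI I"
proof
  assume "wf_instance I" and "ousted I (propI I) r h" and "(r, h) \<in> tentI I"
  then have "feasible I (max_seq I @ [Rej r h])"
    by (auto simp: propI_def tentI_def tents_def intro: feasible.feas_Rej feasible_max_seq)
  with \<open>wf_instance I\<close> show False
    using maximal_feasible_max_seq[of I] by (simp add: maximal_feasible_def)
qed

lemma tentI_unique: "wf_instance I \<Longrightarrow> (r, h1) \<in> tentI I \<Longrightarrow> (r, h2) \<in> tentI I \<Longrightarrow> h1 = h2"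
  unfolding tentI_def by (rule feasible_tents_unique[OF feasible_max_seq])

section \<open>Extensions and completions\<close>

lemma ousted_extension:
  assumes hl: "hlist J h = hlist I h @ ys" and q: "quota J h = quota I h" and o: "ousted I M r h"
  shows "ousted J M r h"
proof -
  let ?R = "res_h h M"
  have before: "card {r' \<in> ?R. precedes (hlist I h) r' r} \<le> card {r' \<in> ?R. precedes (hlist J h) r' r}"
    by (rule card_mono[OF finite_precedes]) (auto simp: hl precedes_append)
  have "card (set (hlist I h) \<inter> ?R) \<le> card (set (hlist J h) \<inter> ?R)"
    by (rule card_mono) (auto simp: hl)
  moreover have "r \<notin> set (hlist J h) \<or> quota J h \<le> card {r' \<in> ?R. precedes (hlist J h) r' r}"
  proof (cases "r \<in> set (hlist I h)")
    case True
    then show ?thesis using o q before by (auto simp: ousted_def)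
  next
    case False
    text \<open>Then r, if on the new list at all, comes after the whole old list.\<close>
    then have "set (hlist I h) \<inter> ?R \<subseteq> {r' \<in> ?R. precedes (hlist J h) r' r} \<or> r \<notin> set (hlist J h)"
      by (auto simp: hl precedes_append)
    then show ?thesis
      using o q card_mono[OF finite_precedes, of "set (hlist I h) \<inter> ?R" ?R "hlist J h" r]
      by (auto simp: ousted_def)
  qed
  ultimately show ?thesis using o q unfolding ousted_def by auto
qed

lemma extension_feasible:
  assumes w: "wf_instance I" and e: "extension I J" and f: "feasible I \<sigma>"
  shows "feasible J \<sigma>"
proof -
  have wJ: "wf_instance J" and R: "Res J = Res I"
    and rl: "\<forall>r\<in>Res I. \<exists>ys. rlist J r = rlist I r @ ys"
    and hl: "\<forall>h\<in>Hosp I. \<exists>ys. hlist J h = hlist I h @ ys"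
    and q: "\<forall>h\<in>Hosp I. quota J h = quota I h"
    using e by (simp_all add: extension_def)
  show ?thesis
    using f
  proof (rule feasible_transfer)
    fix r h assume h: "h \<in> set (rlist I r)"
    then have r: "r \<in> Res I" using wf_instance_rlistD[OF w] by blast
    then obtain ys where ys: "rlist J r = rlist I r @ ys" using rl by blast
    have "\<forall>r\<in>Res J. distinct (rlist J r) \<and> set (rlist J r) \<subseteq> Hosp J"
      using wJ by (simp add: wf_instance_def)
    then have "distinct (rlist J r)" using r R by simp
    then have "distinct (rlist I r @ ys)" by (simp only: ys)
    then show "h \<in> set (rlist J r) \<and> (\<forall>h'. precedes (rlist J r) h' h \<longrightarrow> precedes (rlist I r) h' h)"
      using precedes_append_left[OF h] h by (simp add: ys)
  next
    fix M r h assume M: "M \<subseteq> props \<sigma>" and o: "ousted I M r h"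
    have "(r, h) \<in> props \<sigma>" using ousted_imp_mem[OF o] M by blast
    then have h: "h \<in> Hosp I" using feasible_props_mem[OF w f] by simp
    then obtain ys where ys: "hlist J h = hlist I h @ ys" using hl by blast
    show "ousted J M r h" by (rule ousted_extension[OF ys _ o]) (use q h in simp)
  qed
qed

lemma propI_mono:
  assumes w: "wf_instance I" and e: "extension I J"
  shows "propI I \<subseteq> propI J"
proof -
  have "wf_instance J" using e by (simp add: extension_def)
  then have "set (max_seq I) \<subseteq> set (max_seq J)"
    using feasible_subset_max_seq extension_feasible[OF w e feasible_max_seq[OF w]] by blast
  then show ?thesis by (auto simp: propI_def props_def)
qed

lemma preceding_proposers_not_tentI:
  assumes w: "wf_instance J" and p: "(r, h) \<in> propI J"
    and q: "quota J h \<le> card {r' \<in> res_h h (propI J). precedes (hlist J h) r' r}"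
  shows "(r, h) \<notin> tentI J"
proof -
  have "card {r' \<in> res_h h (propI J). precedes (hlist J h) r' r}
      \<le> card (set (hlist J h) \<inter> res_h h (propI J))"
    by (rule card_mono) (auto dest: precedes_imp_mem)
  then have "ousted J (propI J) r h" using p q by (auto simp: ousted_def)
  then show ?thesis using ousted_not_tentI[OF w] by blast
qed

lemma preceding_proposer_not_tentI:
  assumes "wf_instance J" "quota J h = 1" "(r, h) \<in> propI J" "(r', h) \<in> propI J"
    and "precedes (hlist J h) r' r"
  shows "(r, h) \<notin> tentI J"
proof (rule preceding_proposers_not_tentI)
  have "r' \<in> {r'' \<in> res_h h (propI J). precedes (hlist J h) r'' r}"
    using assms by (simp add: res_h_def)
  then show "quota J h \<le> card {r'' \<in> res_h h (propI J). precedes (hlist J h) r'' r}"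
    using assms(2) finite_precedes card_0_eq by (metis One_nat_def Suc_leI empty_iff neq0_conv)
qed (use assms in auto)

lemma completion_iff:
  assumes "wf_instance I"
  shows "completion I J \<longleftrightarrow> Res J = Res I \<and> Hosp J = Hosp I \<and> (\<forall>h\<in>Hosp I. quota J h = quota I h)
    \<and> (\<forall>r. if r \<in> Res I
           then (\<exists>zs. rlist J r = rlist I r @ zs) \<and> distinct (rlist J r) \<and> set (rlist J r) = Hosp I
           else rlist J r = [])
    \<and> (\<forall>h. if h \<in> Hosp I
           then (\<exists>zs. hlist J h = hlist I h @ zs) \<and> distinct (hlist J h) \<and> set (hlist J h) = Res I
           else hlist J h = [])"
  using assms unfolding completion_def extension_def complete_instance_def wf_instance_def
  by (auto split: if_splits)

lemma exists_distinct_extension: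
  assumes "finite A" "distinct xs" "set xs \<subseteq> A"
  shows "\<exists>zs. distinct (xs @ zs) \<and> set (xs @ zs) = A"
proof -
  obtain zs where "set zs = A - set xs" "distinct zs"
    using finite_distinct_list[of "A - set xs"] assms(1) by blast
  then show ?thesis using assms by (intro exI[of _ zs]) auto
qed

lemma exists_completion:
  assumes w: "wf_instance I"
  shows "\<exists>J. completion I J"
proof -
  have fin: "finite (Res I)" "finite (Hosp I)"
    and rl: "\<forall>r\<in>Res I. distinct (rlist I r) \<and> set (rlist I r) \<subseteq> Hosp I"
    and hl: "\<forall>h\<in>Hosp I. distinct (hlist I h) \<and> set (hlist I h) \<subseteq> Res I"
    using w by (simp_all add: wf_instance_def)
  have "\<forall>r\<in>Res I. \<exists>zs. distinct (rlist I r @ zs) \<and> set (rlist I r @ zs) = Hosp I"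
    using rl exists_distinct_extension[OF fin(2)] by blast
  then obtain zr where zr: "\<forall>r\<in>Res I. distinct (rlist I r @ zr r) \<and> set (rlist I r @ zr r) = Hosp I"
    by (rule bchoice[THEN exE])
  have "\<forall>h\<in>Hosp I. \<exists>zs. distinct (hlist I h @ zs) \<and> set (hlist I h @ zs) = Res I"
    using hl exists_distinct_extension[OF fin(1)] by blast
  then obtain zh where zh: "\<forall>h\<in>Hosp I. distinct (hlist I h @ zh h) \<and> set (hlist I h @ zh h) = Res I"
    by (rule bchoice[THEN exE])
  have "completion I (I\<lparr>rlist := \<lambda>r. if r \<in> Res I then rlist I r @ zr r else [],
                        hlist := \<lambda>h. if h \<in> Hosp I then hlist I h @ zh h else []\<rparr>)"
    using zr zh by (auto simp: completion_iff[OF w])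
  then show ?thesis ..
qed

lemma completion_update_rlist:
  assumes "wf_instance I" "completion I J" "r \<in> Res I"
    and "distinct (rlist I r @ zs)" "set (rlist I r @ zs) = Hosp I"
  shows "completion I (J\<lparr>rlist := (rlist J)(r := rlist I r @ zs)\<rparr>)"
  using assms(2-) by (auto simp: completion_iff[OF assms(1)])

lemma completion_update_hlist:
  assumes "wf_instance I" "completion I J" "h \<in> Hosp I"
    and "distinct (hlist I h @ zs)" "set (hlist I h @ zs) = Res I"
  shows "completion I (J\<lparr>hlist := (hlist J)(h := hlist I h @ zs)\<rparr>)"
  using assms(2-) by (auto simp: completion_iff[OF assms(1)])

lemma completion_hlistE:
  assumes "wf_instance I" "completion I J" "h \<in> Hosp I"
  obtains ys where "hlist J h = hlist I h @ ys" "distinct (hlist I h @ ys)" "set (hlist I h @ ys) = Res I"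
proof -
  have "\<forall>h. if h \<in> Hosp I
      then (\<exists>zs. hlist J h = hlist I h @ zs) \<and> distinct (hlist J h) \<and> set (hlist J h) = Res I
      else hlist J h = []"
    using assms(2) unfolding completion_iff[OF assms(1)] by blast
  then obtain ys where "hlist J h = hlist I h @ ys" "distinct (hlist J h)" "set (hlist J h) = Res I"
    using assms(3) by metis
  then show ?thesis using that by simp
qed

lemma completion_rlistE:
  assumes "wf_instance I" "completion I J" "r \<in> Res I"
  obtains ys where "rlist J r = rlist I r @ ys" "distinct (rlist I r @ ys)" "set (rlist I r @ ys) = Hosp I"
proof -
  have "\<forall>r. if r \<in> Res I
      then (\<exists>zs. rlist J r = rlist I r @ zs) \<and> distinct (rlist J r) \<and> set (rlist J r) = Hosp I
      else rlist J r = []"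
    using assms(2) unfolding completion_iff[OF assms(1)] by blast
  then obtain ys where "rlist J r = rlist I r @ ys" "distinct (rlist J r)" "set (rlist J r) = Hosp I"
    using assms(3) by metis
  then show ?thesis using that by simp
qed

text \<open>Unless the list of h in I already ranks r above r', both are in the freely chosen
  part of the list of h in a completion, so r' can be moved in front of r there.\<close>

lemma completion_move_before:
  assumes w: "wf_instance I" and c: "completion I J" and r: "r \<in> Res I"
    and r': "r' \<in> Res I" "r' \<noteq> r" and h: "h \<in> Hosp I"
    and cond: "r \<in> set (hlist I h) \<longrightarrow> precedes (hlist I h) r' r"
  obtains J' where "completion I J'" "precedes (hlist J' h) r' r"
    "rlist J' = rlist J" "quota J' = quota J" "hlist J' = (hlist J)(h := hlist J' h)"
    "filter (\<lambda>x. x \<noteq> r') (hlist J' h) = filter (\<lambda>x. x \<noteq> r') (hlist J h)"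
proof (cases "precedes (hlist J h) r' r")
  case True
  then show ?thesis using c by (intro that[of J]) auto
next
  case False
  obtain ys where ys: "hlist J h = hlist I h @ ys"
    and d: "distinct (hlist I h @ ys)" and s: "set (hlist I h @ ys) = Res I"
    using completion_hlistE[OF w c h] .
  have "r \<notin> set (hlist I h)" using cond False by (auto simp: ys precedes_append)
  then have "r \<in> set ys" using s r by auto
  moreover have "r' \<notin> set (hlist I h)" using False \<open>r \<in> set ys\<close> by (auto simp: ys precedes_append)
  then have "r' \<in> set ys" using s r' by auto
  ultimately obtain zs where zs: "distinct zs" "set zs = set ys" "precedes zs r' r"
    "filter (\<lambda>x. x \<noteq> r') zs = filter (\<lambda>x. x \<noteq> r') ys"
    using exists_move_before[of ys r r'] d r'(2) by (auto simp: insert_absorb)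
  define J' where "J' = J\<lparr>hlist := (hlist J)(h := hlist I h @ zs)\<rparr>"
  have "completion I J'"
    unfolding J'_def by (rule completion_update_hlist[OF w c h]) (use d s zs in auto)
  moreover have "precedes (hlist J' h) r' r" using zs(3) by (simp add: J'_def precedes_append)
  moreover have "filter (\<lambda>x. x \<noteq> r') (hlist J' h) = filter (\<lambda>x. x \<noteq> r') (hlist J h)"
    using zs(4) by (simp add: J'_def ys)
  ultimately show ?thesis by (intro that[of J']) (simp_all add: J'_def)
qed

text \<open>Ousting at h only compares residents matched to h in M; a resident a outside that set
  may be moved anywhere on the list of h.\<close>

lemma ousted_filter_cong:
  assumes q: "quota J' = quota J" and other: "hlist J' = (hlist J)(h := hlist J' h)"
    and f: "filter (\<lambda>x. x \<noteq> a) (hlist J' h) = filter (\<lambda>x. x \<noteq> a) (hlist J h)"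
    and a: "a \<notin> res_h h M"
  shows "ousted J' M x k \<longleftrightarrow> ousted J M x k"
proof (cases "k = h \<and> (x, k) \<in> M")
  case True
  let ?R = "res_h h M"
  have x: "x \<in> ?R" using True by (auto simp: res_h_def)
  have mem: "y \<in> set (hlist J' h) \<longleftrightarrow> y \<in> set (hlist J h)" if "y \<in> ?R" for y
    using arg_cong[OF f, of set] that a by auto
  have "precedes (hlist J' h) y x \<longleftrightarrow> precedes (hlist J h) y x" if "y \<in> ?R" for y
    using precedes_filter[of "\<lambda>x. x \<noteq> a" y x] f that x a by metis
  then have "{y \<in> ?R. precedes (hlist J' h) y x} = {y \<in> ?R. precedes (hlist J h) y x}"
    by blast
  moreover have "set (hlist J' h) \<inter> ?R = set (hlist J h) \<inter> ?R" using mem by blast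
  ultimately show ?thesis using True q mem[OF x] by (simp add: ousted_def)
next
  case False
  then have "k \<noteq> h \<or> (x, k) \<notin> M" by blast
  then show ?thesis
  proof
    assume "k \<noteq> h"
    then have "hlist J' k = hlist J k" using other by (metis fun_upd_other)
    then show ?thesis using q by (simp add: ousted_def)
  qed (simp add: ousted_def)
qed

section \<open>Ousting a match in some completion\<close>

lemma exists_completion_ousted_by_proposer:
  assumes w: "wf_instance I" and r: "r \<in> Res I" and r': "r' \<in> Res I" "r' \<noteq> r"
    and h: "h \<in> Hosp I" "quota I h = 1" and p: "(r, h) \<in> propI I" "(r', h) \<in> propI I"
    and cond: "r \<in> set (hlist I h) \<longrightarrow> precedes (hlist I h) r' r"
  shows "\<exists>J. completion I J \<and> (r, h) \<notin> tentI J"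
proof -
  obtain J0 where "completion I J0" using exists_completion[OF w] by blast
  then obtain J where c: "completion I J" and pr: "precedes (hlist J h) r' r"
    using completion_move_before[OF w _ r r' h(1) cond] by blast
  then have wJ: "wf_instance J" and e: "extension I J" and qJ: "quota J h = 1"
    using h by (auto simp: completion_def extension_def)
  have "(r, h) \<in> propI J" "(r', h) \<in> propI J" using propI_mono[OF w e] p by auto
  then have "(r, h) \<notin> tentI J" by (rule preceding_proposer_not_tentI[OF wJ qJ _ _ pr])
  with c show ?thesis by blast
qed

definition exhausted :: "('r, 'h) hr_instance \<Rightarrow> ('r, 'h) event list \<Rightarrow> 'r \<Rightarrow> bool" where
  "exhausted I \<sigma> r \<longleftrightarrow> (\<forall>h. (r, h) \<in> props \<sigma> \<longrightarrow> h \<in> set (rlist I r))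
     \<and> (\<forall>h\<in>set (rlist I r). (r, h) \<in> rejs \<sigma>)"

lemma exhausted_free: "exhausted I \<sigma> r \<Longrightarrow> r \<notin> res_of (tents \<sigma>)"
  by (auto simp: exhausted_def res_of_def tents_def)

lemma completion_insert_after_prefix:
  assumes w: "wf_instance I" and c: "completion I J" and r: "r \<in> Res I"
    and h: "h \<in> Hosp I" "h \<notin> set (rlist I r)"
  obtains zs where "completion I (J\<lparr>rlist := (rlist J)(r := rlist I r @ h # zs)\<rparr>)"
proof -
  obtain ys where d: "distinct (rlist I r @ ys)" and s: "set (rlist I r @ ys) = Hosp I"
    using completion_rlistE[OF w c r] by metis
  have "completion I (J\<lparr>rlist := (rlist J)(r := rlist I r @ h # filter (\<lambda>x. x \<noteq> h) ys)\<rparr>)"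
    by (rule completion_update_rlist[OF w c r]) (use d s h in auto)
  then show ?thesis by (rule that)
qed

text \<open>Making h the choice of r right after its list of I leaves the sequence feasible, since r
  never got that far, and lets r propose to h next.\<close>

lemma exhausted_next_choice:
  assumes w: "wf_instance I" and c: "completion I J" and f: "feasible J \<sigma>"
    and ex: "exhausted I \<sigma> r" and r: "r \<in> Res I" and h: "h \<in> Hosp I" "h \<notin> set (rlist I r)"
  obtains J' where "completion I J'" "hlist J' = hlist J" "quota J' = quota J" "(r, h) \<in> propI J'"
proof -
  obtain zs where "completion I (J\<lparr>rlist := (rlist J)(r := rlist I r @ h # zs)\<rparr>)"
    using completion_insert_after_prefix[OF w c r h] by blast
  moreover define J' where "J' = J\<lparr>rlist := (rlist J)(r := rlist I r @ h # zs)\<rparr>"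
  ultimately have c': "completion I J'" by simp
  have d': "distinct (rlist I r @ h # zs)"
  proof -
    obtain ys where "rlist J' r = rlist I r @ ys" "distinct (rlist I r @ ys)"
      using completion_rlistE[OF w c' r] by blast
    then show ?thesis by (simp add: J'_def)
  qed
  have no_prop: "(r, h) \<notin> props \<sigma>" using ex h(2) by (auto simp: exhausted_def)
  have "feasible J' \<sigma>"
    using f
  proof (rule feasible_transfer)
    fix x k assume "Prop x k \<in> set \<sigma>" and k: "k \<in> set (rlist J x)"
    show "k \<in> set (rlist J' x) \<and> (\<forall>h'. precedes (rlist J' x) h' k \<longrightarrow> precedes (rlist J x) h' k)"
    proof (cases "x = r")
      case True
      then have kI: "k \<in> set (rlist I r)"
        using ex \<open>Prop x k \<in> set \<sigma>\<close> by (auto simp: exhausted_def mem_props_iff)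
      obtain ys where ys: "rlist J r = rlist I r @ ys" using completion_rlistE[OF w c r] by metis
      have "precedes (rlist I r @ h # zs) h' k \<Longrightarrow> precedes (rlist J r) h' k" for h'
        using precedes_append_left[OF kI d'] by (simp add: ys precedes_append)
      then show ?thesis using True kI by (simp add: J'_def)
    qed (use k in \<open>simp add: J'_def\<close>)
  qed (simp add: J'_def ousted_def)
  moreover have "h \<in> set (rlist J' r)" by (simp add: J'_def)
  moreover have "(r, h') \<in> rejs \<sigma>" if "precedes (rlist J' r) h' h" for h'
  proof -
    have "h' \<in> set (rlist I r)"
      using that h(2) d' by (auto simp: J'_def precedes_append precedes_Cons dest: precedes_imp_mem)
    then show ?thesis using ex by (simp add: exhausted_def)
  qed
  ultimately have "feasible J' (\<sigma> @ [Prop r h])"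
    using exhausted_free[OF ex] no_prop by (auto intro: feasible.feas_Prop)
  then have "(r, h) \<in> propI J'"
    using feasible_subset_max_seq[of J'] c' by (fastforce simp: propI_def mem_props_iff completion_def extension_def)
  then show ?thesis using that c' by (simp add: J'_def)
qed

lemma exists_completion_ousted_by_exhausted:
  assumes w: "wf_instance I" and c: "completion I J" and f: "feasible J \<sigma>"
    and ex: "exhausted I \<sigma> r'"
    and r: "r \<in> Res I" and r': "r' \<in> Res I" "r' \<noteq> r" and h: "h \<in> Hosp I" "quota I h = 1"
    and p: "(r, h) \<in> propI I" and nh: "h \<notin> set (rlist I r')"
    and cond: "r \<in> set (hlist I h) \<longrightarrow> precedes (hlist I h) r' r"
  shows "\<exists>J'. completion I J' \<and> (r, h) \<notin> tentI J'"
proof -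
  obtain J1 where c1: "completion I J1" and pr: "precedes (hlist J1 h) r' r"
    and rl1: "rlist J1 = rlist J" and q1: "quota J1 = quota J"
    and hl1: "hlist J1 = (hlist J)(h := hlist J1 h)"
    and fl1: "filter (\<lambda>x. x \<noteq> r') (hlist J1 h) = filter (\<lambda>x. x \<noteq> r') (hlist J h)"
    using completion_move_before[OF w c r r' h(1) cond] by blast
  have "feasible J1 \<sigma>" \<comment> \<open>r' has not proposed to h in \<sigma>, so its move is harmless\<close>
    using f
  proof (rule feasible_transfer)
    fix M x k assume "M \<subseteq> props \<sigma>" and "ousted J M x k"
    moreover have "(r', h) \<notin> props \<sigma>" using ex nh by (auto simp: exhausted_def)
    ultimately show "ousted J1 M x k" using ousted_filter_cong[OF q1 hl1 fl1] by (auto simp: res_h_def)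
  qed (simp add: rl1)
  then obtain J2 where c2: "completion I J2" and hl2: "hlist J2 = hlist J1"
    and "(r', h) \<in> propI J2"
    using exhausted_next_choice[OF w c1 _ ex r'(1) h(1) nh] by blast
  moreover have "(r, h) \<in> propI J2" using p propI_mono[OF w] c2 by (auto simp: completion_def)
  moreover have "quota J2 h = 1" using c2 h by (simp add: completion_iff[OF w])
  moreover have "wf_instance J2" using c2 by (simp add: completion_def extension_def)
  ultimately have "(r, h) \<notin> tentI J2"
    using preceding_proposer_not_tentI pr hl2 by metis
  then show ?thesis using c2 by blast
qed

lemma resident_minimal_tentI_last:
  assumes w: "wf_instance I" and rm: "resident_minimal I" and t: "(r, h) \<in> tentI I"
    and h': "h' \<in> set (rlist I r)" "h' \<noteq> h"
  shows "precedes (rlist I r) h' h"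
proof (rule ccontr)
  have "(r, h) \<in> propI I" and not_rej: "(r, h) \<notin> rejs (max_seq I)"
    using t by (simp_all add: tentI_def propI_def tents_def)
  then have "h \<in> set (rlist I r)" using rm by (simp add: resident_minimal_def)
  moreover assume "\<not> precedes (rlist I r) h' h"
  ultimately have "precedes (rlist I r) h h'" using precedes_total h' by metis
  moreover have "Prop r h' \<in> set (max_seq I)"
    using rm h'(1) by (simp add: resident_minimal_def propI_def mem_props_iff[symmetric])
  ultimately show False using feasible_PropD[OF feasible_max_seq[OF w]] not_rej by blast
qed

lemma resident_minimal_exhausted_max_seq:
  "resident_minimal I \<Longrightarrow> r \<notin> res_of (tentI I) \<Longrightarrow> exhausted I (max_seq I) r"
  by (auto simp: exhausted_def resident_minimal_def propI_def tentI_def tents_def res_of_def)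

text \<open>Take the prefix of the maximal J-sequence ending with the rejection of (r, h). By
  resident-minimality h is the last hospital on the list of r in I, so r has been rejected by all
  of them; and r never got further than h.\<close>

lemma exhausted_before_rejection:
  assumes w: "wf_instance I" and rm: "resident_minimal I" and c: "completion I J"
    and t: "(r, h) \<in> tentI I" and nt: "(r, h) \<notin> tentI J"
  shows "\<exists>\<sigma>. feasible J \<sigma> \<and> exhausted I \<sigma> r"
proof -
  have wJ: "wf_instance J" and e: "extension I J" using c by (simp_all add: completion_def extension_def)
  have pI: "(r, h) \<in> propI I" using t by (simp add: tentI_def propI_def tents_def)
  then have hI: "h \<in> set (rlist I r)" using rm by (simp add: resident_minimal_def)
  have "(r, h) \<in> propI J" using propI_mono[OF w e] pI by blast
  then have "Rej r h \<in> set (max_seq J)"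
    using nt by (simp add: propI_def tentI_def tents_def mem_rejs_iff)
  then obtain ys zs where split: "max_seq J = ys @ Rej r h # zs" and first: "Rej r h \<notin> set ys"
    by (meson split_list_first)
  let ?\<sigma> = "ys @ [Rej r h]"
  have f\<sigma>: "feasible J ?\<sigma>"
    using feasible_max_seq[OF wJ] feasible_appendD[of J ?\<sigma> zs] by (simp add: split)
  then have fys: "feasible J ys" using feasible_appendD by blast
  have "(r, h) \<in> props ys" using ousted_imp_mem[OF feasible_snoc_RejD[OF f\<sigma>]] .
  then have prop_h: "Prop r h \<in> set ys" by (simp add: mem_props_iff)
  obtain E where E: "rlist J r = rlist I r @ E"
    using completion_rlistE[OF w c wf_instance_rlistD[OF w hI, THEN conjunct1]] by blast
  have "k \<in> set (rlist I r)" if "(r, k) \<in> props ?\<sigma>" for k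
  proof (rule ccontr)
    have "Prop r k \<in> set ys" using that by (simp add: mem_props_iff)
    note k = feasible_PropD[OF fys this]
    assume "k \<notin> set (rlist I r)"
    then have "precedes (rlist J r) h k" using k hI by (simp add: E precedes_append)
    then show False using k first by (simp add: mem_rejs_iff)
  qed
  moreover have "(r, k) \<in> rejs ?\<sigma>" if k: "k \<in> set (rlist I r)" for k
  proof (cases "k = h")
    case False
    then have "precedes (rlist J r) k h"
      using resident_minimal_tentI_last[OF w rm t k] by (simp add: E precedes_append)
    then show ?thesis using feasible_PropD[OF fys prop_h] by simp
  qed simp
  ultimately show ?thesis using f\<sigma> unfolding exhausted_def by blast
qed

lemma exists_exhausting_completion:
  assumes w: "wf_instance I" and rm: "resident_minimal I"
    and nf: "\<forall>k. (r, k) \<in> tentI I \<longrightarrow> \<not> finalizable I r k"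
  shows "\<exists>J \<sigma>. completion I J \<and> feasible J \<sigma> \<and> exhausted I \<sigma> r"
proof (cases "r \<in> res_of (tentI I)")
  case True
  then obtain h where t: "(r, h) \<in> tentI I" by (auto simp: res_of_def)
  then obtain J where "completion I J" "(r, h) \<notin> tentI J"
    using nf by (auto simp: finalizable_def)
  then show ?thesis using exhausted_before_rejection[OF w rm _ t] by blast
next
  case False
  obtain J where c: "completion I J" using exists_completion[OF w] by blast
  then have "feasible J (max_seq I)"
    using extension_feasible[OF w _ feasible_max_seq[OF w]] by (simp add: completion_def)
  then show ?thesis using c resident_minimal_exhausted_max_seq[OF rm False] by blast
qed

section \<open>Safe sets\<close>

text \<open>This relies on a resident having at most one tentative match.\<close>

lemma relevant_antimono:
  assumes w: "wf_instance I" and MM': "M \<subseteq> M'" and M': "M' \<subseteq> tentI I"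
    and rel: "relevant M' h r"
  shows "relevant M h r"
proof (cases "r \<in> res_of M")
  case True
  then obtain h' where "(r, h') \<in> M" by (auto simp: res_of_def)
  moreover have "(r, h) \<in> M'" using rel True MM' by (auto simp: relevant_def res_of_def)
  ultimately have "h' = h" using tentI_unique[OF w] MM' M' by blast
  then show ?thesis using \<open>(r, h') \<in> M\<close> by (simp add: relevant_def)
qed (simp add: relevant_def)

lemma endangered_antimono:
  assumes w: "wf_instance I" and MM': "M \<subseteq> M'" and M': "M' \<subseteq> tentI I"
    and m: "(r, h) \<in> M" and en: "endangered I M' r h"
  shows "endangered I M r h"
proof -
  have fin: "finite (Res I)" using w by (simp add: wf_instance_def)
  have rel: "relevant M' h y \<Longrightarrow> relevant M h y" for y using relevant_antimono[OF w MM' M'] .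
  have "card {y \<in> Res I. relevant M' h y} \<le> card {y \<in> Res I. relevant M h y}"
    by (rule card_mono) (use fin rel in auto)
  moreover have "card {y \<in> Res I. precedes (hlist I h) y r \<and> relevant M' h y}
      \<le> card {y \<in> Res I. precedes (hlist I h) y r \<and> relevant M h y}"
    by (rule card_mono) (use fin rel in auto)
  ultimately show ?thesis using en m unfolding endangered_def by (auto split: if_splits)
qed

text \<open>Safety is preserved under unions.\<close>

lemma max_safe_eq_Union:
  assumes w: "wf_instance I"
  shows "max_safe I = \<Union>{M. safe I M}"
proof -
  let ?U = "\<Union>{M. safe I M}"
  have U: "?U \<subseteq> tentI I" by (auto simp: safe_def)
  have "\<not> endangered I ?U r h" if rh: "(r, h) \<in> ?U" for r h
  proof -
    obtain M where M: "safe I M" "(r, h) \<in> M" using rh by blast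
    then have "M \<subseteq> ?U" by blast
    then show ?thesis using endangered_antimono[OF w _ U M(2)] M by (auto simp: safe_def)
  qed
  then have safe_U: "safe I ?U" using U by (auto simp: safe_def)
  show ?thesis
    unfolding max_safe_def
  proof (rule the_equality)
    show "safe I ?U \<and> (\<forall>M'. safe I M' \<and> ?U \<subseteq> M' \<longrightarrow> M' = ?U)" using safe_U by blast
  next
    fix M assume "safe I M \<and> (\<forall>M'. safe I M' \<and> M \<subseteq> M' \<longrightarrow> M' = M)"
    then show "M = ?U" using safe_U by blast
  qed
qed

lemma endangered_quota_one_witness:
  assumes w: "wf_instance I" and q: "quota I h = 1" and t: "(r, h) \<in> tentI I"
    and en: "endangered I M r h"
  shows "\<exists>r' \<in> Res I. r' \<noteq> r \<and> relevant M h r' \<and> (r \<in> set (hlist I h) \<longrightarrow> precedes (hlist I h) r' r)"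
proof (cases "r \<in> set (hlist I h)")
  case True
  then have "(r, h) \<notin> pendI I" by (simp add: pendI_def pends_def)
  then have "card {r' \<in> Res I. precedes (hlist I h) r' r \<and> relevant M h r'} \<noteq> 0"
    using en q by (simp add: endangered_def)
  then obtain r' where r': "r' \<in> Res I" "precedes (hlist I h) r' r" "relevant M h r'"
    by (metis (no_types, lifting) card.empty empty_Collect_eq)
  have "distinct (hlist I h)"
    using w True by (auto simp: wf_instance_def)
  then have "r' \<noteq> r" using r'(2) precedes_irrefl by metis
  then show ?thesis using r' by blast
next
  case False
  then have "(r, h) \<in> pendI I" using t by (simp add: pendI_def pends_def tentI_def)
  then have "2 \<le> card {r' \<in> Res I. relevant M h r'}"
    using en q by (simp add: endangered_def)
  then have "\<not> {r' \<in> Res I. relevant M h r'} \<subseteq> {r}"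
    using card_mono[of "{r}" "{r' \<in> Res I. relevant M h r'}"] by fastforce
  then show ?thesis using False by blast
qed

lemma finalizable_not_endangered:
  assumes w: "wf_instance I" and rm: "resident_minimal I" and q: "\<forall>h'\<in>Hosp I. quota I h' = 1"
    and fin: "finalizable I r h"
  shows "\<not> endangered I {(x, k). finalizable I x k} r h"
proof
  let ?F = "{(x, k). finalizable I x k}"
  assume en: "endangered I ?F r h"
  have t: "(r, h) \<in> tentI I" using fin by (simp add: finalizable_def)
  then have p: "(r, h) \<in> propI I" by (simp add: tentI_def propI_def tents_def)
  then have rh: "r \<in> Res I" "h \<in> Hosp I"
    using feasible_props_mem[OF w feasible_max_seq[OF w]] by (simp_all add: propI_def)
  have qh: "quota I h = 1" using q rh(2) by simp
  obtain r' where r': "r' \<in> Res I" "r' \<noteq> r" and rel: "relevant ?F h r'"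
    and cond: "r \<in> set (hlist I h) \<longrightarrow> precedes (hlist I h) r' r"
    using endangered_quota_one_witness[OF w qh t en] by blast
  obtain J where "completion I J" "(r, h) \<notin> tentI J"
  proof (cases "(r', h) \<in> propI I")
    case True
    then show ?thesis
      using exists_completion_ousted_by_proposer[OF w rh(1) r' rh(2) qh p _ cond] that by blast
  next
    case False
    then have "(r', h) \<notin> ?F" by (auto simp: finalizable_def tentI_def propI_def tents_def)
    then have "r' \<notin> res_of ?F" using rel by (simp add: relevant_def)
    then have "\<forall>k. (r', k) \<in> tentI I \<longrightarrow> \<not> finalizable I r' k" by (auto simp: res_of_def)
    then obtain J0 \<sigma> where c: "completion I J0" and f: "feasible J0 \<sigma>" and ex: "exhausted I \<sigma> r'"
      using exists_exhausting_completion[OF w rm] by blast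
    have "h \<notin> set (rlist I r')" using False rm by (simp add: resident_minimal_def)
    then show ?thesis
      using exists_completion_ousted_by_exhausted[OF w c f ex rh(1) r' rh(2) qh p _ cond] that by blast
  qed
  then show False using fin by (simp add: finalizable_def)
qed

theorem theorem7:
  fixes I :: "('r, 'h) hr_instance" and r :: 'r and h :: 'h
  assumes "wf_instance I"
    and "resident_minimal I"
    and "\<forall>h'\<in>Hosp I. quota I h' = 1"
    and "(r, h) \<in> tentI I"
    and "finalizable I r h"
  shows "(r, h) \<in> max_safe I"
proof -
  have "safe I {(x, k). finalizable I x k}"
    using finalizable_not_endangered[OF assms(1-3)] by (auto simp: safe_def finalizable_def)
  then show ?thesis using assms(5) max_safe_eq_Union[OF assms(1)] by blast
qed

end
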